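(* Let $(a_0,a_1,\ldots,a_n)$ be a finite sequence of positive integers and $\omega=[a_0,a_1,\ldots,a_n,1,1,1,\ldots]$. Then for every $\varepsilon>0$ there exist an integer $m>0$ and a positive integer $N$ such that the number $\beta$ whose continued fraction digits (indexed from $0$) are $a_0,\ldots,a_n$ in positions $0,\ldots,n$, the digit $N$ in position $n+m$, and $1$ in all other positions, satisfies $$\Phi(\omega)+\varepsilon<\Phi(\beta)<\Phi(\omega)+2\varepsilon.$$
   Context: For positive integers $d_0,d_1,\ldots$, $[d_0,d_1,d_2,\ldots]$ denotes the continued fraction $\cfrac{1}{d_0+\cfrac{1}{d_1+\cfrac{1}{d_2+\cdots}}}$, and for $\beta=[d_0,d_1,\ldots]$ we write $\alpha_j(\beta)=[d_j,d_{j+1},\ldots]$. The Yoccoz Brjuno function is $\Phi(\beta)=\sum_{k\ge 0}\alpha_0(\beta)\alpha_1(\beta)\cdots\alpha_{k-1}(\beta)\log\frac{1}{\alpha_k(\beta)}\in[0,\infty]$ (the $k=0$ term is $\log\frac{1}{\alpha_0(\beta)}$). *)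

theory Defs
  imports "HOL-Analysis.Analysis"
begin

fun cfrac_fin :: "(nat \<Rightarrow> nat) \<Rightarrow> nat \<Rightarrow> real" where
  "cfrac_fin d 0 = 1 / real (d 0)"
| "cfrac_fin d (Suc n) = 1 / (real (d 0) + cfrac_fin (\<lambda>k. d (Suc k)) n)"

definition cfrac :: "(nat \<Rightarrow> nat) \<Rightarrow> real" where
  "cfrac d = lim (cfrac_fin d)"

text \<open>alpha_j(beta): iterates of the Gauss map, alpha_0 = beta, alpha_(j+1) = frac(1/alpha_j);
  for beta = [d_0, d_1, ...] irrational this gives alpha_j = [d_j, d_(j+1), ...].\<close>
fun alpha :: "real \<Rightarrow> nat \<Rightarrow> real" where
  "alpha \<beta> 0 = \<beta>"
| "alpha \<beta> (Suc j) = frac (1 / alpha \<beta> j)"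

definition Phi :: "real \<Rightarrow> ereal" where
  "Phi \<beta> = (\<Sum>k. ereal ((\<Prod>j<k. alpha \<beta> j) * ln (1 / alpha \<beta> k)))"

end

theory Submission
  imports Defs
begin

(* Let beta_N have the digits of omega, except for the digit N at a position P > n.  Since
   all digits beyond P are 1, Phi (beta_N) is a finite sum plus a geometric tail.  Replacing
   N by N + 1 changes alpha_P from 1/(N + g) to 1/(N + 1 + g) (g = golden mean tail), which
   moves every alpha_k with k < P by O(2^(-(P - k)/2)), because the Moebius maps of two
   consecutive digits contract by 1/4; hence one step changes Phi by O(P^2 2^(-P/2)) < eps
   for P large.  If D bounds the digits a_k, the term of index P is at least
   (D + 1)^(-P) log N, so Phi (beta_N) is unbounded in N.  As beta_1 = omega, the first N
   with Phi (beta_N) > Phi omega + eps satisfies Phi (beta_N) < Phi omega + 2 eps. *)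

fun cfrac_tail :: "(nat \<Rightarrow> nat) \<Rightarrow> nat \<Rightarrow> real \<Rightarrow> real" where
  "cfrac_tail d 0 t = t"
| "cfrac_tail d (Suc n) t = 1 / (real (d 0) + cfrac_tail (\<lambda>k. d (Suc k)) n t)"

lemma abs_inverse_add_diff:
  fixes c x y :: real
  assumes "0 < c + x" "0 < c + y"
  shows "\<bar>1 / (c + x) - 1 / (c + y)\<bar> = 1 / (c + x) * (1 / (c + y)) * \<bar>x - y\<bar>"
proof -
  have "1 / (c + x) - 1 / (c + y) = 1 / (c + x) * (1 / (c + y)) * (y - x)"
    using assms by (simp add: field_simps)
  then show ?thesis
    using assms by (simp add: abs_mult abs_minus_commute)
qed

lemma divide_add_le_half:
  fixes c x :: real
  assumes "1 \<le> c" "0 \<le> x" "x \<le> 1"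
  shows "x / (c + x) \<le> 1 / 2"
  using assms by (simp add: field_simps)

lemma cfrac_tail_bounds:
  assumes "\<forall>k. 1 \<le> d k" "0 \<le> t" "t \<le> 1"
  shows "0 \<le> cfrac_tail d n t \<and> cfrac_tail d n t \<le> 1"
  using assms(1)
proof (induction n arbitrary: d)
  case 0
  then show ?case using assms by simp
next
  case (Suc n)
  have "0 \<le> cfrac_tail (\<lambda>k. d (Suc k)) n t"
    using Suc by simp
  moreover have "1 \<le> real (d 0)"
    using Suc.prems by simp
  ultimately show ?case
    by (simp add: divide_le_eq)
qed

lemma cfrac_tail_Suc_Suc_dist:
  assumes d: "\<forall>k. 1 \<le> d k" and t: "0 \<le> t" "t \<le> 1" "0 \<le> t'" "t' \<le> 1"
  shows "\<bar>cfrac_tail d (Suc (Suc n)) t - cfrac_tail d (Suc (Suc n)) t'\<bar>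
    \<le> 1 / 4 * \<bar>cfrac_tail (\<lambda>k. d (Suc (Suc k))) n t - cfrac_tail (\<lambda>k. d (Suc (Suc k))) n t'\<bar>"
proof -
  define x where "x = cfrac_tail (\<lambda>k. d (Suc (Suc k))) n t"
  define x' where "x' = cfrac_tail (\<lambda>k. d (Suc (Suc k))) n t'"
  define y where "y = 1 / (real (d 1) + x)"
  define y' where "y' = 1 / (real (d 1) + x')"
  have d01: "1 \<le> real (d 0)" "1 \<le> real (d 1)"
    using d by auto
  have x: "0 \<le> x" "x \<le> 1" "0 \<le> x'" "x' \<le> 1"
    using cfrac_tail_bounds[of "\<lambda>k. d (Suc (Suc k))"] d t by (auto simp: x_def x'_def)
  then have y: "0 \<le> y" "y \<le> 1" "0 \<le> y'" "y' \<le> 1"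
    using d01 by (auto simp: y_def y'_def divide_le_eq)
  have "cfrac_tail d (Suc (Suc n)) t = 1 / (d 0 + y)" "cfrac_tail d (Suc (Suc n)) t' = 1 / (d 0 + y')"
    by (simp_all add: x_def x'_def y_def y'_def)
  then have "\<bar>cfrac_tail d (Suc (Suc n)) t - cfrac_tail d (Suc (Suc n)) t'\<bar>
      = 1 / (d 0 + y) * (1 / (d 0 + y')) * \<bar>y - y'\<bar>"
    using abs_inverse_add_diff[of "real (d 0)" y y'] d01 y by simp
  also have "\<bar>y - y'\<bar> = y * y' * \<bar>x - x'\<bar>"
    using abs_inverse_add_diff[of "real (d 1)" x x'] d01 x by (simp add: y_def y'_def)
  finally have "\<bar>cfrac_tail d (Suc (Suc n)) t - cfrac_tail d (Suc (Suc n)) t'\<bar>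
      = y / (d 0 + y) * (y' / (d 0 + y')) * \<bar>x - x'\<bar>"
    by simp
  also have "\<dots> \<le> 1 / 2 * (1 / 2) * \<bar>x - x'\<bar>"
    using d01 y by (intro mult_right_mono mult_mono divide_add_le_half) auto
  finally show ?thesis
    by (simp add: x_def x'_def)
qed

lemma cfrac_tail_dist_le:
  assumes "\<forall>k. 1 \<le> d k" "0 \<le> t" "t \<le> 1" "0 \<le> t'" "t' \<le> 1"
  shows "\<bar>cfrac_tail d n t - cfrac_tail d n t'\<bar> \<le> (1 / 2) ^ (n div 2) * \<bar>t - t'\<bar>"
  using assms(1)
proof (induction n arbitrary: d rule: nat_induct2)
  case 0
  then show ?case by simp
next
  case 1
  then have "1 \<le> real (d 0)" by simp
  then have "\<bar>cfrac_tail d 1 t - cfrac_tail d 1 t'\<bar> = 1 / (d 0 + t) * (1 / (d 0 + t')) * \<bar>t - t'\<bar>"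
    using abs_inverse_add_diff[of "real (d 0)" t t'] assms by simp
  also have "\<dots> \<le> 1 * 1 * \<bar>t - t'\<bar>"
    using \<open>1 \<le> real (d 0)\<close> assms by (intro mult_right_mono mult_mono) auto
  finally show ?case by simp
next
  case (step n)
  have "\<bar>cfrac_tail d (Suc (Suc n)) t - cfrac_tail d (Suc (Suc n)) t'\<bar>
      \<le> 1 / 4 * \<bar>cfrac_tail (\<lambda>k. d (Suc (Suc k))) n t - cfrac_tail (\<lambda>k. d (Suc (Suc k))) n t'\<bar>"
    using cfrac_tail_Suc_Suc_dist[OF step.prems assms(2-5)] .
  also have "\<dots> \<le> 1 / 4 * ((1 / 2) ^ (n div 2) * \<bar>t - t'\<bar>)"
    using step.IH[of "\<lambda>k. d (Suc (Suc k))"] step.prems by simp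
  also have "\<dots> \<le> 1 / 2 * ((1 / 2) ^ (n div 2) * \<bar>t - t'\<bar>)"
    by (intro mult_right_mono) auto
  finally show ?case
    by simp
qed

lemma cfrac_fin_eq_cfrac_tail: "cfrac_fin d n = cfrac_tail d n (1 / real (d n))"
  by (induction n arbitrary: d) auto

lemma cfrac_tail_add: "cfrac_tail d (n + k) t = cfrac_tail d n (cfrac_tail (\<lambda>i. d (n + i)) k t)"
  by (induction n arbitrary: d) auto

lemma cfrac_fin_add: "cfrac_fin d (n + k) = cfrac_tail d n (cfrac_fin (\<lambda>i. d (n + i)) k)"
  by (simp add: cfrac_fin_eq_cfrac_tail cfrac_tail_add add.assoc)

lemma cfrac_fin_bounds:
  assumes "\<forall>k. 1 \<le> d k"
  shows "0 \<le> cfrac_fin d n \<and> cfrac_fin d n \<le> 1"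
proof -
  have "1 \<le> real (d n)"
    using assms by simp
  then have "0 \<le> 1 / real (d n)" "1 / real (d n) \<le> 1"
    by auto
  then show ?thesis
    unfolding cfrac_fin_eq_cfrac_tail using cfrac_tail_bounds[OF assms] by blast
qed

lemma cfrac_fin_dist_le:
  assumes d: "\<forall>k. 1 \<le> d k" and "n \<le> m"
  shows "\<bar>cfrac_fin d m - cfrac_fin d n\<bar> \<le> (1 / 2) ^ (n div 2)"
proof -
  obtain k where m: "m = n + k"
    using \<open>n \<le> m\<close> le_Suc_ex by blast
  define s where "s = cfrac_fin (\<lambda>i. d (n + i)) k"
  have s: "0 \<le> s" "s \<le> 1"
    using cfrac_fin_bounds[of "\<lambda>i. d (n + i)"] d by (auto simp: s_def)
  have "1 \<le> real (d n)"
    using d by simp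
  then have dn: "0 \<le> 1 / real (d n)" "1 / real (d n) \<le> 1"
    by auto
  have "\<bar>cfrac_fin d m - cfrac_fin d n\<bar> = \<bar>cfrac_tail d n s - cfrac_tail d n (1 / real (d n))\<bar>"
    by (simp add: m s_def cfrac_fin_add cfrac_fin_eq_cfrac_tail[of d n])
  also have "\<dots> \<le> (1 / 2) ^ (n div 2) * \<bar>s - 1 / real (d n)\<bar>"
    using cfrac_tail_dist_le[OF d s dn] .
  also have "\<dots> \<le> (1 / 2) ^ (n div 2) * 1"
  proof -
    have "\<bar>s - 1 / real (d n)\<bar> \<le> 1"
      by (rule abs_leI) (use s dn in linarith)+
    then show ?thesis
      by (intro mult_left_mono) auto
  qed
  finally show ?thesis by simp
qed

lemma Cauchy_cfrac_fin:
  assumes "\<forall>k. 1 \<le> d k"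
  shows "Cauchy (cfrac_fin d)"
proof (rule CauchyI')
  fix e :: real
  assume "0 < e"
  obtain j where j: "(1 / 2 :: real) ^ j < e"
    using real_arch_pow_inv[OF \<open>0 < e\<close>, of "1 / 2"] by auto
  have "\<bar>cfrac_fin d n - cfrac_fin d m\<bar> < e" if "2 * j \<le> m" "m < n" for m n
  proof -
    have "(1 / 2 :: real) ^ (m div 2) \<le> (1 / 2) ^ j"
      using that by (intro power_decreasing) auto
    then show ?thesis
      using cfrac_fin_dist_le[OF assms, of m n] that j by linarith
  qed
  then show "\<exists>M. \<forall>m\<ge>M. \<forall>n>m. dist (cfrac_fin d m) (cfrac_fin d n) < e"
    by (auto simp: dist_real_def abs_minus_commute)
qed

lemma cfrac_fin_tendsto:
  assumes "\<forall>k. 1 \<le> d k"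
  shows "cfrac_fin d \<longlonglongrightarrow> cfrac d"
  using Cauchy_cfrac_fin[OF assms] unfolding cfrac_def Cauchy_convergent_iff convergent_LIMSEQ_iff .

lemma cfrac_nonneg_le_1:
  assumes "\<forall>k. 1 \<le> d k"
  shows "0 \<le> cfrac d \<and> cfrac d \<le> 1"
  using LIMSEQ_le_const[OF cfrac_fin_tendsto[OF assms]] LIMSEQ_le_const2[OF cfrac_fin_tendsto[OF assms]]
    cfrac_fin_bounds[OF assms] by blast

lemma cfrac_Suc:
  assumes d: "\<forall>k. 1 \<le> d k"
  shows "cfrac d = 1 / (real (d 0) + cfrac (\<lambda>k. d (Suc k)))"
proof -
  have d': "\<forall>k. 1 \<le> d (Suc k)"
    using d by simp
  have "1 \<le> real (d 0)"
    using d by simp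
  then have "real (d 0) + cfrac (\<lambda>k. d (Suc k)) \<noteq> 0"
    using cfrac_nonneg_le_1[OF d'] by linarith
  then have "(\<lambda>n. 1 / (real (d 0) + cfrac_fin (\<lambda>k. d (Suc k)) n))
      \<longlonglongrightarrow> 1 / (real (d 0) + cfrac (\<lambda>k. d (Suc k)))"
    by (intro tendsto_intros cfrac_fin_tendsto[OF d'])
  then have "(\<lambda>n. cfrac_fin d (Suc n)) \<longlonglongrightarrow> 1 / (real (d 0) + cfrac (\<lambda>k. d (Suc k)))"
    by simp
  moreover have "(\<lambda>n. cfrac_fin d (Suc n)) \<longlonglongrightarrow> cfrac d"
    using cfrac_fin_tendsto[OF d] by (rule LIMSEQ_Suc)
  ultimately show ?thesis
    using LIMSEQ_unique by blast
qed

lemma cfrac_pos: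
  assumes "\<forall>k. 1 \<le> d k"
  shows "0 < cfrac d"
proof -
  have "0 \<le> cfrac (\<lambda>k. d (Suc k))" "1 \<le> real (d 0)"
    using cfrac_nonneg_le_1[of "\<lambda>k. d (Suc k)"] assms by auto
  then show ?thesis
    unfolding cfrac_Suc[OF assms] by simp
qed

lemma cfrac_bounds:
  assumes "\<forall>k. 1 \<le> d k"
  shows "0 < cfrac d \<and> cfrac d < 1"
proof -
  have "0 < cfrac (\<lambda>k. d (Suc k))" "1 \<le> real (d 0)"
    using cfrac_pos[of "\<lambda>k. d (Suc k)"] assms by auto
  then show ?thesis
    using cfrac_pos[OF assms] unfolding cfrac_Suc[OF assms] by (simp add: divide_less_eq)
qed

lemma alpha_cfrac:
  assumes d: "\<forall>k. 1 \<le> d k"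
  shows "alpha (cfrac d) j = cfrac (\<lambda>i. d (j + i))"
proof (induction j)
  case 0
  then show ?case by simp
next
  case (Suc j)
  have dj: "\<forall>k. 1 \<le> d (j + k)" "\<forall>k. 1 \<le> d (Suc j + k)"
    using d by auto
  have "1 / cfrac (\<lambda>i. d (j + i)) = real (d j) + cfrac (\<lambda>i. d (Suc j + i))"
    using cfrac_Suc[OF dj(1)] cfrac_bounds[OF dj(2)] d by simp
  then have "alpha (cfrac d) (Suc j) = frac (real (d j) + cfrac (\<lambda>i. d (Suc j + i)))"
    using Suc by simp
  also have "\<dots> = cfrac (\<lambda>i. d (Suc j + i))"
    using cfrac_bounds[OF dj(2)] by (simp add: frac_add_int_left frac_eq)
  finally show ?case .
qed

(* The recursion alpha_k = 1 / (d_k + alpha_(k+1)) of the tails of a continued fraction,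
   with real digits c k in place of d_k. *)
definition cf_tail_seq :: "(nat \<Rightarrow> real) \<Rightarrow> (nat \<Rightarrow> real) \<Rightarrow> bool" where
  "cf_tail_seq c u \<longleftrightarrow> (\<forall>k. 1 \<le> c k \<and> 0 < u k \<and> u k = 1 / (c k + u (Suc k)))"

lemma cf_tail_seqD:
  assumes "cf_tail_seq c u"
  shows "1 \<le> c k" "0 < u k" "u k = 1 / (c k + u (Suc k))"
  using assms unfolding cf_tail_seq_def by blast+

lemma cf_tail_seq_le_1:
  assumes "cf_tail_seq c u"
  shows "u k \<le> 1"
  using cf_tail_seqD[OF assms, of k] cf_tail_seqD(2)[OF assms, of "Suc k"] by simp

lemma cf_tail_seq_ln_inverse_nonneg:
  assumes "cf_tail_seq c u"
  shows "0 \<le> ln (1 / u k)"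
  using cf_tail_seqD(2)[OF assms] cf_tail_seq_le_1[OF assms] by simp

lemma cf_tail_seq_ge:
  assumes "cf_tail_seq c u" "c k \<le> D"
  shows "1 / (D + 1) \<le> u k"
  using cf_tail_seqD[OF assms(1), of k] cf_tail_seq_le_1[OF assms(1), of "Suc k"]
    cf_tail_seqD(2)[OF assms(1), of "Suc k"] assms(2)
  by (simp add: frac_le)

lemma cf_tail_seq_mult_Suc_le_half:
  assumes "cf_tail_seq c u"
  shows "u k * u (Suc k) \<le> 1 / 2"
  using divide_add_le_half[of "c k" "u (Suc k)"] cf_tail_seqD[OF assms, of k]
    cf_tail_seqD(2)[OF assms, of "Suc k"] cf_tail_seq_le_1[OF assms, of "Suc k"]
  by (simp add: less_imp_le)

lemma cf_tail_seq_prod_le: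
  assumes "cf_tail_seq c u"
  shows "(\<Prod>i<l. u (k + i)) \<le> (1 / 2) ^ (l div 2)"
proof (induction l arbitrary: k rule: nat_induct2)
  case 0
  then show ?case by simp
next
  case 1
  then show ?case using cf_tail_seq_le_1[OF assms] by simp
next
  case (step l)
  have "(\<Prod>i<l + 2. u (k + i)) = u k * u (Suc k) * (\<Prod>i<l. u (Suc (Suc k) + i))"
    by (simp only: add_2_eq_Suc' prod.lessThan_Suc_shift) (simp add: ac_simps)
  also have "\<dots> \<le> 1 / 2 * (1 / 2) ^ (l div 2)"
    using cf_tail_seq_mult_Suc_le_half[OF assms] step[of "Suc (Suc k)"] cf_tail_seqD(2)[OF assms]
    by (intro mult_mono) (auto simp: prod_nonneg less_imp_le)
  finally show ?case by simp
qed

lemma cf_tail_seq_diff_le: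
  assumes u: "cf_tail_seq c u" and v: "cf_tail_seq c' v"
    and agree: "\<forall>i<l. c (k + i) = c' (k + i)"
  shows "\<bar>u k - v k\<bar> \<le> (\<Prod>i<l. u (k + i)) * \<bar>u (k + l) - v (k + l)\<bar>"
  using agree
proof (induction l arbitrary: k)
  case 0
  then show ?case by simp
next
  case (Suc l)
  have "c k = c' k" and agree': "\<forall>i<l. c (Suc k + i) = c' (Suc k + i)"
    using Suc.prems by auto
  then have "\<bar>u k - v k\<bar> = u k * v k * \<bar>u (Suc k) - v (Suc k)\<bar>"
    using abs_inverse_add_diff[of "c k" "u (Suc k)" "v (Suc k)"] cf_tail_seqD[OF u, of k]
      cf_tail_seqD[OF v, of k] cf_tail_seqD(2)[OF u, of "Suc k"] cf_tail_seqD(2)[OF v, of "Suc k"]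
    by simp
  also have "\<dots> \<le> u k * \<bar>u (Suc k) - v (Suc k)\<bar>"
    using cf_tail_seqD(2)[OF u] cf_tail_seqD(2)[OF v] cf_tail_seq_le_1[OF v]
    by (intro mult_right_mono mult_right_le_one_le) (auto simp: less_imp_le)
  also have "\<dots> \<le> u k * ((\<Prod>i<l. u (Suc k + i)) * \<bar>u (Suc k + l) - v (Suc k + l)\<bar>)"
    using Suc.IH[OF agree'] cf_tail_seqD(2)[OF u] by (intro mult_left_mono) (auto simp: less_imp_le)
  also have "\<dots> = (\<Prod>i<Suc l. u (k + i)) * \<bar>u (k + Suc l) - v (k + Suc l)\<bar>"
    by (simp only: prod.lessThan_Suc_shift) (simp add: ac_simps)
  finally show ?case .
qed

lemma cf_tail_seq_alpha_cfrac:
  assumes "\<forall>k. 1 \<le> d k"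
  shows "cf_tail_seq (\<lambda>k. real (d k)) (alpha (cfrac d))"
  unfolding cf_tail_seq_def alpha_cfrac[OF assms]
proof
  fix k
  have dk: "\<forall>i. 1 \<le> d (k + i)"
    using assms by simp
  show "1 \<le> real (d k) \<and> 0 < cfrac (\<lambda>i. d (k + i))
      \<and> cfrac (\<lambda>i. d (k + i)) = 1 / (real (d k) + cfrac (\<lambda>i. d (Suc k + i)))"
    using assms cfrac_pos[OF dk] cfrac_Suc[OF dk] by simp
qed

definition brjuno_weight :: "(nat \<Rightarrow> real) \<Rightarrow> nat \<Rightarrow> real" where
  "brjuno_weight u k = (\<Prod>j<k. u j)"

lemma brjuno_weight_nonneg: "(\<And>j. 0 \<le> u j) \<Longrightarrow> 0 \<le> brjuno_weight u k"
  by (simp add: brjuno_weight_def prod_nonneg)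

lemma brjuno_weight_add: "brjuno_weight u (j + l) = brjuno_weight u j * (\<Prod>i<l. u (j + i))"
  by (induction l) (auto simp: brjuno_weight_def)

lemma cf_tail_seq_brjuno_weight_le:
  assumes "cf_tail_seq c u"
  shows "brjuno_weight u k \<le> (1 / 2) ^ (k div 2)"
  using cf_tail_seq_prod_le[OF assms, where l = k and k = 0] by (simp add: brjuno_weight_def)

lemma brjuno_weight_diff_le:
  assumes u: "\<And>j. 0 \<le> u j" and v: "\<And>j. 0 \<le> v j" "\<And>j. v j \<le> 1"
  shows "\<bar>brjuno_weight u k - brjuno_weight v k\<bar> \<le> (\<Sum>j<k. brjuno_weight u j * \<bar>u j - v j\<bar>)"
proof (induction k)
  case 0
  then show ?case by (simp add: brjuno_weight_def)
next
  case (Suc k)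
  have "brjuno_weight u (Suc k) - brjuno_weight v (Suc k)
      = (brjuno_weight u k - brjuno_weight v k) * v k + brjuno_weight u k * (u k - v k)"
    by (simp add: brjuno_weight_def algebra_simps)
  then have "\<bar>brjuno_weight u (Suc k) - brjuno_weight v (Suc k)\<bar>
      \<le> \<bar>brjuno_weight u k - brjuno_weight v k\<bar> * v k + brjuno_weight u k * \<bar>u k - v k\<bar>"
    using v brjuno_weight_nonneg[of u, OF u] by (simp add: abs_mult order_trans[OF abs_triangle_ineq])
  also have "\<dots> \<le> \<bar>brjuno_weight u k - brjuno_weight v k\<bar> + brjuno_weight u k * \<bar>u k - v k\<bar>"
    using v by (simp add: mult_left_le)
  also have "\<dots> \<le> (\<Sum>j<Suc k. brjuno_weight u j * \<bar>u j - v j\<bar>)"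
    using Suc by simp
  finally show ?case .
qed

lemma abs_ln_diff_le:
  fixes a b m :: real
  assumes "0 < m" "m \<le> a" "m \<le> b"
  shows "\<bar>ln a - ln b\<bar> \<le> \<bar>a - b\<bar> / m"
proof -
  have "ln p - ln q \<le> (p - q) / m" if "m \<le> q" "q \<le> p" for p q :: real
  proof -
    have "ln p - ln q = ln (p / q)"
      using that assms(1) by (simp add: ln_div)
    also have "\<dots> \<le> p / q - 1"
      using that assms(1) by (intro ln_le_minus_one) simp
    also have "\<dots> = (p - q) / q"
      using that assms(1) by (simp add: field_simps)
    also have "\<dots> \<le> (p - q) / m"
      using that assms(1) by (intro divide_left_mono) auto
    finally show ?thesis .
  qed
  from this[of b a] this[of a b] show ?thesis
    using assms by (cases "b \<le> a") auto
qed

lemma half_power_div_2_mult_le: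
  "(1 / 2 :: real) ^ (k div 2) * (1 / 2) ^ (l div 2) \<le> 2 * (1 / 2) ^ ((k + l) div 2)"
proof -
  have "(k + l) div 2 \<le> Suc (k div 2 + l div 2)"
    by linarith
  then have "(1 / 2 :: real) ^ Suc (k div 2 + l div 2) \<le> (1 / 2) ^ ((k + l) div 2)"
    by (intro power_decreasing) auto
  then show ?thesis
    by (simp add: power_add)
qed

(* The Brjuno sum of the tails u, cut after index P; C stands for Phi of the tail beyond P. *)
definition brjuno_trunc :: "(nat \<Rightarrow> real) \<Rightarrow> nat \<Rightarrow> real \<Rightarrow> real" where
  "brjuno_trunc u P C = (\<Sum>k\<le>P. brjuno_weight u k * ln (1 / u k)) + brjuno_weight u (Suc P) * C"

definition jump_bound :: "nat \<Rightarrow> real \<Rightarrow> real \<Rightarrow> real" where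
  "jump_bound P D C = (1 / 2) ^ (P div 2)
     * (real P * (real P * ln (D + 1) + 2 * (D + 1)) + real P + 1 + C * (real P + 1))"

lemma jump_bound_4_tendsto_0: "(\<lambda>q. jump_bound (4 * q) D C) \<longlonglongrightarrow> 0"
proof -
  define s where "s q = real q * (1 / 2 :: real) ^ q" for q
  define t where "t q = (1 / 2 :: real) ^ q" for q
  have "s \<longlonglongrightarrow> 0"
    unfolding s_def by (rule powser_times_n_limit_0) simp
  moreover have "t \<longlonglongrightarrow> 0"
    unfolding t_def by (rule LIMSEQ_power_zero) simp
  ultimately have "(\<lambda>q. 16 * ln (D + 1) * s q ^ 2 + (8 * (D + 1) + 4 + 4 * C) * (s q * t q)
      + (1 + C) * t q ^ 2) \<longlonglongrightarrow> 16 * ln (D + 1) * 0 ^ 2 + (8 * (D + 1) + 4 + 4 * C) * (0 * 0)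
      + (1 + C) * 0 ^ 2"
    by (intro tendsto_intros)
  moreover have "jump_bound (4 * q) D C = 16 * ln (D + 1) * s q ^ 2
      + (8 * (D + 1) + 4 + 4 * C) * (s q * t q) + (1 + C) * t q ^ 2" for q
  proof -
    have "(1 / 2 :: real) ^ (4 * q div 2) = t q ^ 2"
      unfolding t_def by (simp add: power_mult[symmetric] mult.commute)
    then show ?thesis
      by (simp add: jump_bound_def s_def t_def power2_eq_square algebra_simps)
  qed
  ultimately show ?thesis
    by simp
qed

lemma exists_jump_bound_less:
  assumes "0 < \<epsilon>"
  shows "\<exists>P>n. jump_bound P D C < \<epsilon>"
proof -
  have "\<forall>\<^sub>F q in sequentially. jump_bound (4 * q) D C < \<epsilon> \<and> n < q"
    using order_tendstoD(2)[OF jump_bound_4_tendsto_0 assms] eventually_gt_at_top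
    by (rule eventually_conj)
  then obtain q where "jump_bound (4 * q) D C < \<epsilon>" "n < q"
    by (auto dest: eventually_happens'[OF sequentially_bot])
  then show ?thesis
    by (intro exI[of _ "4 * q"]) auto
qed

(* Two tail sequences whose digits agree before P, where the digit N is raised to N + 1:
   then x = N + golden_tail. *)
locale last_digit_jump =
  fixes c c' u v :: "nat \<Rightarrow> real" and P :: nat and D x :: real
  assumes u: "cf_tail_seq c u" and v: "cf_tail_seq c' v"
    and agree: "\<And>k. k < P \<Longrightarrow> c k = c' k" and digits_le: "\<And>k. k < P \<Longrightarrow> c k \<le> D"
    and D: "1 \<le> D" and x: "1 \<le> x" and u_P: "u P = 1 / x" and v_P: "v P = 1 / (x + 1)"
begin

lemma jump_diff_eq: "\<bar>u P - v P\<bar> = 1 / (x * (x + 1))"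
proof -
  have "1 / x - 1 / (x + 1) = 1 / (x * (x + 1))"
    using x by (simp add: field_simps)
  then show ?thesis
    using x by (simp add: u_P v_P)
qed

lemma jump_diff_le_1: "\<bar>u P - v P\<bar> \<le> 1"
proof -
  have "1 \<le> x * (x + 1)"
    using x mult_mono[of 1 x 1 "x + 1"] by simp
  then show ?thesis
    unfolding jump_diff_eq by simp
qed

lemma jump_diff_mult_ln_le_1: "\<bar>u P - v P\<bar> * ln x \<le> 1"
proof -
  have "x * 1 \<le> x * (x + 1)"
    using x by (intro mult_left_mono) auto
  moreover have "ln x \<le> x - 1"
    using x by (intro ln_le_minus_one) simp
  ultimately have "ln x \<le> x * (x + 1)"
    by linarith
  then show ?thesis
    unfolding jump_diff_eq using x by (simp add: divide_le_eq)
qed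

lemma weight_diff_le:
  assumes "k \<le> Suc P"
  shows "\<bar>brjuno_weight u k - brjuno_weight v k\<bar> \<le> real k * (1 / 2) ^ (P div 2) * \<bar>u P - v P\<bar>"
proof -
  have u0: "\<And>j. 0 \<le> u j" and v0: "\<And>j. 0 \<le> v j"
    using cf_tail_seqD(2)[OF u] cf_tail_seqD(2)[OF v] by (auto simp: less_imp_le)
  have "\<bar>brjuno_weight u k - brjuno_weight v k\<bar> \<le> (\<Sum>j<k. brjuno_weight u j * \<bar>u j - v j\<bar>)"
    using brjuno_weight_diff_le[OF u0 v0 cf_tail_seq_le_1[OF v]] .
  also have "\<dots> \<le> (\<Sum>j<k. (1 / 2) ^ (P div 2) * \<bar>u P - v P\<bar>)"
  proof (rule sum_mono)
    fix j
    assume "j \<in> {..<k}"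
    then have "j \<le> P"
      using assms by simp
    then have "\<bar>u j - v j\<bar> \<le> (\<Prod>i<P - j. u (j + i)) * \<bar>u P - v P\<bar>"
      using cf_tail_seq_diff_le[OF u v, of "P - j" j] agree by simp
    then have "brjuno_weight u j * \<bar>u j - v j\<bar>
        \<le> brjuno_weight u j * (\<Prod>i<P - j. u (j + i)) * \<bar>u P - v P\<bar>"
      using brjuno_weight_nonneg[OF u0] by (simp add: mult_left_mono mult.assoc)
    also have "\<dots> = brjuno_weight u P * \<bar>u P - v P\<bar>"
      using brjuno_weight_add[of u j "P - j"] \<open>j \<le> P\<close> by simp
    also have "\<dots> \<le> (1 / 2) ^ (P div 2) * \<bar>u P - v P\<bar>"
      using cf_tail_seq_brjuno_weight_le[OF u] by (intro mult_right_mono) auto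
    finally show "brjuno_weight u j * \<bar>u j - v j\<bar> \<le> (1 / 2) ^ (P div 2) * \<bar>u P - v P\<bar>" .
  qed
  finally show ?thesis
    by simp
qed

lemma tail_diff_le:
  assumes "k \<le> P"
  shows "\<bar>u k - v k\<bar> \<le> (1 / 2) ^ ((P - k) div 2)"
proof -
  have "\<bar>u k - v k\<bar> \<le> (\<Prod>i<P - k. u (k + i)) * \<bar>u P - v P\<bar>"
    using cf_tail_seq_diff_le[OF u v, of "P - k" k] agree assms by simp
  also have "\<dots> \<le> (1 / 2) ^ ((P - k) div 2) * 1"
    using cf_tail_seq_prod_le[OF u] jump_diff_le_1 by (intro mult_mono) auto
  finally show ?thesis
    by simp
qed

lemma tails_ge_before_jump:
  assumes "k < P"
  shows "1 / (D + 1) \<le> u k" "1 / (D + 1) \<le> v k"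
  using cf_tail_seq_ge[OF u] cf_tail_seq_ge[OF v] digits_le agree assms by auto

lemma ln_inverse_tail_le_before_jump:
  assumes "k < P"
  shows "ln (1 / u k) \<le> ln (D + 1)"
proof -
  have "0 < u k"
    using cf_tail_seqD(2)[OF u] .
  moreover have "1 / u k \<le> D + 1"
    using tails_ge_before_jump(1)[OF assms] D \<open>0 < u k\<close> by (simp add: field_simps)
  ultimately show ?thesis
    using D by (simp add: ln_le_cancel_iff)
qed

lemma ln_inverse_tail_diff_before_jump:
  assumes "k < P"
  shows "\<bar>ln (1 / u k) - ln (1 / v k)\<bar> \<le> (D + 1) * (1 / 2) ^ ((P - k) div 2)"
proof -
  note lower = tails_ge_before_jump[OF assms]
  have "0 < 1 / (D + 1)"
    using D by simp
  have "\<bar>ln (1 / u k) - ln (1 / v k)\<bar> = \<bar>ln (u k) - ln (v k)\<bar>"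
    using lower \<open>0 < 1 / (D + 1)\<close> by (simp add: ln_div abs_minus_commute)
  also have "\<dots> \<le> \<bar>u k - v k\<bar> / (1 / (D + 1))"
    using abs_ln_diff_le[OF \<open>0 < 1 / (D + 1)\<close> lower] .
  also have "\<dots> \<le> (D + 1) * (1 / 2) ^ ((P - k) div 2)"
    using tail_diff_le[of k] assms D by (simp add: mult.commute)
  finally show ?thesis .
qed

lemma term_diff_before_jump:
  assumes "k < P"
  shows "\<bar>brjuno_weight u k * ln (1 / u k) - brjuno_weight v k * ln (1 / v k)\<bar>
    \<le> (1 / 2) ^ (P div 2) * (real P * ln (D + 1) + 2 * (D + 1))"
proof -
  have ln_u: "0 \<le> ln (1 / u k)" "ln (1 / u k) \<le> ln (D + 1)"
    using cf_tail_seq_ln_inverse_nonneg[OF u] ln_inverse_tail_le_before_jump[OF assms] .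
  note ln_diff = ln_inverse_tail_diff_before_jump[OF assms]
  have weight_diff: "\<bar>brjuno_weight u k - brjuno_weight v k\<bar> \<le> real P * (1 / 2) ^ (P div 2)"
  proof -
    have "real k * (1 / 2 :: real) ^ (P div 2) * \<bar>u P - v P\<bar> \<le> real P * (1 / 2) ^ (P div 2) * 1"
      using assms jump_diff_le_1 by (intro mult_mono) auto
    then show ?thesis
      using weight_diff_le[of k] assms by linarith
  qed
  have weight_v: "0 \<le> brjuno_weight v k" "brjuno_weight v k \<le> (1 / 2) ^ (k div 2)"
    using cf_tail_seqD(2)[OF v] cf_tail_seq_brjuno_weight_le[OF v]
    by (auto intro: brjuno_weight_nonneg less_imp_le)
  have "brjuno_weight u k * ln (1 / u k) - brjuno_weight v k * ln (1 / v k)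
      = (brjuno_weight u k - brjuno_weight v k) * ln (1 / u k)
        + brjuno_weight v k * (ln (1 / u k) - ln (1 / v k))"
    by (simp add: algebra_simps)
  then have "\<bar>brjuno_weight u k * ln (1 / u k) - brjuno_weight v k * ln (1 / v k)\<bar>
      \<le> \<bar>brjuno_weight u k - brjuno_weight v k\<bar> * ln (1 / u k)
        + brjuno_weight v k * \<bar>ln (1 / u k) - ln (1 / v k)\<bar>"
    using ln_u weight_v by (simp add: abs_mult order_trans[OF abs_triangle_ineq])
  also have "\<dots> \<le> real P * (1 / 2) ^ (P div 2) * ln (D + 1)
      + (1 / 2) ^ (k div 2) * ((D + 1) * (1 / 2) ^ ((P - k) div 2))"
    using weight_diff ln_u weight_v ln_diff by (intro add_mono mult_mono) auto
  also have "\<dots> \<le> real P * (1 / 2) ^ (P div 2) * ln (D + 1) + (D + 1) * (2 * (1 / 2) ^ (P div 2))"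
    using half_power_div_2_mult_le[of k "P - k"] assms D by (simp add: mult.left_commute)
  finally show ?thesis
    by (simp add: algebra_simps)
qed

lemma term_diff_at_jump:
  "\<bar>brjuno_weight u P * ln (1 / u P) - brjuno_weight v P * ln (1 / v P)\<bar>
    \<le> (1 / 2) ^ (P div 2) * (real P + 1)"
proof -
  have "\<bar>ln (x + 1) - ln x\<bar> \<le> 1 / x"
    using x abs_ln_diff_le[of x "x + 1" x] by simp
  moreover have "1 / x \<le> 1"
    using x by simp
  ultimately have "\<bar>ln (x + 1) - ln x\<bar> \<le> 1"
    by linarith
  then have ln_x: "\<bar>ln (x + 1) - ln x\<bar> \<le> 1" "0 \<le> ln x"
    using x by simp_all
  have weight_v: "0 \<le> brjuno_weight v P" "brjuno_weight v P \<le> (1 / 2) ^ (P div 2)"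
    using cf_tail_seqD(2)[OF v] cf_tail_seq_brjuno_weight_le[OF v]
    by (auto intro: brjuno_weight_nonneg less_imp_le)
  have "brjuno_weight u P * ln x - brjuno_weight v P * ln (x + 1)
      = (brjuno_weight u P - brjuno_weight v P) * ln x - brjuno_weight v P * (ln (x + 1) - ln x)"
    by (simp add: algebra_simps)
  then have "\<bar>brjuno_weight u P * ln x - brjuno_weight v P * ln (x + 1)\<bar>
      \<le> \<bar>brjuno_weight u P - brjuno_weight v P\<bar> * ln x + brjuno_weight v P * \<bar>ln (x + 1) - ln x\<bar>"
    using ln_x weight_v by (simp add: abs_mult order_trans[OF abs_triangle_ineq4])
  also have "\<dots> \<le> real P * (1 / 2) ^ (P div 2) * \<bar>u P - v P\<bar> * ln x + (1 / 2) ^ (P div 2) * 1"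
    using weight_diff_le[of P] ln_x weight_v by (intro add_mono mult_mono) auto
  also have "\<dots> \<le> real P * (1 / 2) ^ (P div 2) * 1 + (1 / 2) ^ (P div 2)"
    using mult_left_mono[OF jump_diff_mult_ln_le_1, of "real P * (1 / 2) ^ (P div 2)"]
    by (simp add: mult.assoc)
  finally show ?thesis
    using x by (simp add: u_P v_P algebra_simps)
qed

lemma brjuno_trunc_diff_le:
  assumes "0 \<le> C"
  shows "\<bar>brjuno_trunc u P C - brjuno_trunc v P C\<bar> \<le> jump_bound P D C"
proof -
  define t where "t w k = brjuno_weight w k * ln (1 / w k)" for w k
  have split: "brjuno_trunc w P C = (\<Sum>k<P. t w k) + t w P + brjuno_weight w (Suc P) * C" for w
    by (simp add: brjuno_trunc_def t_def lessThan_Suc_atMost[symmetric])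
  have "\<bar>(\<Sum>k<P. t u k) - (\<Sum>k<P. t v k)\<bar> \<le> (\<Sum>k<P. \<bar>t u k - t v k\<bar>)"
    by (simp only: sum_subtractf[symmetric] sum_abs)
  also have "\<dots> \<le> real P * ((1 / 2) ^ (P div 2) * (real P * ln (D + 1) + 2 * (D + 1)))"
    using sum_bounded_above[of "{..<P}" "\<lambda>k. \<bar>t u k - t v k\<bar>"] term_diff_before_jump
    by (simp add: t_def)
  finally have before: "\<bar>(\<Sum>k<P. t u k) - (\<Sum>k<P. t v k)\<bar>
      \<le> real P * ((1 / 2) ^ (P div 2) * (real P * ln (D + 1) + 2 * (D + 1)))" .
  have "\<bar>brjuno_weight u (Suc P) * C - brjuno_weight v (Suc P) * C\<bar>
      = \<bar>brjuno_weight u (Suc P) - brjuno_weight v (Suc P)\<bar> * C"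
    using assms by (simp add: abs_mult left_diff_distrib[symmetric])
  also have "\<dots> \<le> real (Suc P) * (1 / 2) ^ (P div 2) * C"
  proof -
    have "real (Suc P) * (1 / 2 :: real) ^ (P div 2) * \<bar>u P - v P\<bar> \<le> real (Suc P) * (1 / 2) ^ (P div 2) * 1"
      using jump_diff_le_1 by (intro mult_left_mono) auto
    then have "\<bar>brjuno_weight u (Suc P) - brjuno_weight v (Suc P)\<bar> \<le> real (Suc P) * (1 / 2) ^ (P div 2)"
      using weight_diff_le[OF order_refl] by linarith
    then show ?thesis
      using assms by (rule mult_right_mono)
  qed
  finally have after: "\<bar>brjuno_weight u (Suc P) * C - brjuno_weight v (Suc P) * C\<bar>
      \<le> real (Suc P) * (1 / 2) ^ (P div 2) * C" .
  have "\<bar>brjuno_trunc u P C - brjuno_trunc v P C\<bar>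
      \<le> real P * ((1 / 2) ^ (P div 2) * (real P * ln (D + 1) + 2 * (D + 1)))
        + (1 / 2) ^ (P div 2) * (real P + 1) + real (Suc P) * (1 / 2) ^ (P div 2) * C"
    using before after term_diff_at_jump unfolding split t_def by (smt (verit))
  also have "\<dots> = jump_bound P D C"
    by (simp add: jump_bound_def algebra_simps)
  finally show ?thesis .
qed

end

definition golden_tail :: real where
  "golden_tail = cfrac (\<lambda>_. 1)"

(* Phi golden_tail: every alpha_j of golden_tail equals golden_tail, so Phi is geometric. *)
definition brjuno_golden :: real where
  "brjuno_golden = ln (1 / golden_tail) / (1 - golden_tail)"

lemma golden_tail_bounds: "0 < golden_tail" "golden_tail < 1"
  using cfrac_bounds[of "\<lambda>_. 1"] by (auto simp: golden_tail_def)

lemma brjuno_golden_nonneg: "0 \<le> brjuno_golden"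
  using golden_tail_bounds by (simp add: brjuno_golden_def)

lemma alpha_cfrac_beyond_last:
  assumes "\<forall>k. 1 \<le> d k" "\<forall>k>P. d k = 1" "P < j"
  shows "alpha (cfrac d) j = golden_tail"
proof -
  have "(\<lambda>i. d (j + i)) = (\<lambda>_. 1)"
    using assms by auto
  then show ?thesis
    using alpha_cfrac[OF assms(1)] by (simp add: golden_tail_def)
qed

lemma alpha_cfrac_last:
  assumes "\<forall>k. 1 \<le> d k" "\<forall>k>P. d k = 1"
  shows "alpha (cfrac d) P = 1 / (real (d P) + golden_tail)"
proof -
  have "alpha (cfrac d) P = 1 / (real (d P) + alpha (cfrac d) (Suc P))"
    using cf_tail_seqD(3)[OF cf_tail_seq_alpha_cfrac[OF assms(1)]] .
  also have "alpha (cfrac d) (Suc P) = golden_tail"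
    by (rule alpha_cfrac_beyond_last[OF assms]) simp
  finally show ?thesis .
qed

lemma Phi_cfrac_eventually_one:
  assumes d: "\<forall>k. 1 \<le> d k" and ones: "\<forall>k>P. d k = 1"
  shows "Phi (cfrac d) = ereal (brjuno_trunc (alpha (cfrac d)) P brjuno_golden)"
proof -
  define u where "u = alpha (cfrac d)"
  define t where "t k = brjuno_weight u k * ln (1 / u k)" for k
  have Phi: "Phi (cfrac d) = (\<Sum>k. ereal (t k))"
    unfolding Phi_def t_def brjuno_weight_def u_def ..
  have golden: "u (Suc P + k) = golden_tail" for k
    unfolding u_def by (rule alpha_cfrac_beyond_last[OF d ones]) simp
  have "brjuno_weight u (Suc P + k) = brjuno_weight u (Suc P) * golden_tail ^ k" for k
    using brjuno_weight_add[of u "Suc P" k] golden by simp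
  then have "t (Suc P + k) = brjuno_weight u (Suc P) * ln (1 / golden_tail) * golden_tail ^ k" for k
    using golden[of k] by (simp add: t_def)
  then have "(\<lambda>k. t (k + Suc P)) = (\<lambda>k. brjuno_weight u (Suc P) * ln (1 / golden_tail) * golden_tail ^ k)"
    by (simp add: add.commute)
  then have "(\<lambda>k. t (k + Suc P)) sums (brjuno_weight u (Suc P) * brjuno_golden)"
    using sums_mult[OF geometric_sums, of golden_tail "brjuno_weight u (Suc P) * ln (1 / golden_tail)"]
      golden_tail_bounds by (simp add: brjuno_golden_def)
  then have "t sums ((\<Sum>k\<le>P. t k) + brjuno_weight u (Suc P) * brjuno_golden)"
    using sums_iff_shift[of t "Suc P"] by (simp add: lessThan_Suc_atMost add.commute)
  moreover have "brjuno_trunc u P brjuno_golden = (\<Sum>k\<le>P. t k) + brjuno_weight u (Suc P) * brjuno_golden"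
    by (simp add: brjuno_trunc_def t_def)
  ultimately have "(\<lambda>k. ereal (t k)) sums ereal (brjuno_trunc u P brjuno_golden)"
    by (simp add: sums_ereal)
  then show ?thesis
    unfolding Phi u_def by (rule sums_unique[symmetric])
qed

lemma brjuno_trunc_ge:
  assumes u: "cf_tail_seq c u" and le_D: "\<forall>k<P. c k \<le> D" and "0 \<le> C"
  shows "(1 / (D + 1)) ^ P * ln (1 / u P) \<le> brjuno_trunc u P C"
proof -
  have u0: "\<And>j. 0 \<le> u j"
    using cf_tail_seqD(2)[OF u] less_imp_le by blast
  have "(\<Prod>k<P. 1 / (D + 1)) \<le> brjuno_weight u P"
    unfolding brjuno_weight_def
  proof (rule prod_mono)
    fix k
    assume "k \<in> {..<P}"
    then show "0 \<le> 1 / (D + 1) \<and> 1 / (D + 1) \<le> u k"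
      using cf_tail_seq_ge[OF u] cf_tail_seqD(1)[OF u, of k] le_D by fastforce
  qed
  then have "(1 / (D + 1)) ^ P * ln (1 / u P) \<le> brjuno_weight u P * ln (1 / u P)"
    using cf_tail_seq_ln_inverse_nonneg[OF u] by (simp add: mult_right_mono)
  moreover have "0 \<le> brjuno_weight u k * ln (1 / u k)" for k
    using brjuno_weight_nonneg[OF u0] cf_tail_seq_ln_inverse_nonneg[OF u] by simp
  then have "brjuno_weight u P * ln (1 / u P) \<le> brjuno_trunc u P C"
    unfolding brjuno_trunc_def
    using member_le_sum[of P "{..P}" "\<lambda>k. brjuno_weight u k * ln (1 / u k)"]
      brjuno_weight_nonneg[OF u0] \<open>0 \<le> C\<close> by (simp add: add_increasing2)
  ultimately show ?thesis
    by linarith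
qed

lemma brjuno_trunc_last_digit_Suc_le:
  fixes d :: "nat \<Rightarrow> nat"
  assumes d: "\<forall>k. 1 \<le> d k" and le_D: "\<forall>k<P. real (d k) \<le> D" and D: "1 \<le> D"
    and ones: "\<forall>k>P. d k = 1" and N: "1 \<le> N" and C: "0 \<le> C"
  shows "brjuno_trunc (alpha (cfrac (d(P := Suc N)))) P C
    \<le> brjuno_trunc (alpha (cfrac (d(P := N)))) P C + jump_bound P D C"
proof -
  have upd: "\<forall>k. 1 \<le> (d(P := N')) k" "\<forall>k>P. (d(P := N')) k = 1" if "1 \<le> N'" for N'
    using d ones that by auto
  interpret last_digit_jump "\<lambda>k. real ((d(P := N)) k)" "\<lambda>k. real ((d(P := Suc N)) k)"
    "alpha (cfrac (d(P := N)))" "alpha (cfrac (d(P := Suc N)))" P D "real N + golden_tail"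
  proof
    show "cf_tail_seq (\<lambda>k. real ((d(P := N)) k)) (alpha (cfrac (d(P := N))))"
      by (rule cf_tail_seq_alpha_cfrac[OF upd(1)[OF N]])
    show "cf_tail_seq (\<lambda>k. real ((d(P := Suc N)) k)) (alpha (cfrac (d(P := Suc N))))"
      by (rule cf_tail_seq_alpha_cfrac[OF upd(1)]) simp
    show "alpha (cfrac (d(P := N))) P = 1 / (real N + golden_tail)"
      using alpha_cfrac_last[of "d(P := N)", OF upd[OF N]] by simp
    show "alpha (cfrac (d(P := Suc N))) P = 1 / (real N + golden_tail + 1)"
      using alpha_cfrac_last[of "d(P := Suc N)", OF upd] by (simp add: add_ac)
    show "1 \<le> real N + golden_tail"
      using N golden_tail_bounds by simp
  qed (use le_D D in auto)
  show ?thesis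
    using brjuno_trunc_diff_le[OF C] by linarith
qed

lemma exists_crossing_of_bounded_steps:
  fixes f :: "nat \<Rightarrow> real"
  assumes "f m \<le> c" "c < f M" "m \<le> M" and step: "\<And>N. m \<le> N \<Longrightarrow> f (Suc N) \<le> f N + \<eta>"
  shows "\<exists>N>m. c < f N \<and> f N \<le> c + \<eta>"
  using assms(2,3)
proof (induction M)
  case 0
  then show ?case
    using assms(1) by simp
next
  case (Suc M)
  show ?case
  proof (cases "m \<le> M \<and> c < f M")
    case True
    then show ?thesis
      using Suc.IH by blast
  next
    case False
    have "m \<noteq> Suc M"
      using Suc.prems(1) assms(1) by auto
    then have "m \<le> M" "f M \<le> c"
      using Suc.prems(2) False by auto
    then have "m < Suc M" "c < f (Suc M)" "f (Suc M) \<le> c + \<eta>"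
      using Suc.prems(1) step[of M] by auto
    then show ?thesis
      by blast
  qed
qed

lemma exists_last_digit_Phi_between:
  fixes d :: "nat \<Rightarrow> nat"
  assumes d: "\<forall>k. 1 \<le> d k" and le_D: "\<forall>k<P. real (d k) \<le> D" and D: "1 \<le> D"
    and ones: "\<forall>k\<ge>P. d k = 1" and \<epsilon>: "0 < \<epsilon>" and small: "jump_bound P D brjuno_golden < \<epsilon>"
  shows "\<exists>N>0. Phi (cfrac d) + ereal \<epsilon> < Phi (cfrac (d(P := N)))
    \<and> Phi (cfrac (d(P := N))) < Phi (cfrac d) + ereal (2 * \<epsilon>)"
proof -
  define f where "f N = brjuno_trunc (alpha (cfrac (d(P := N)))) P brjuno_golden" for N
  have upd: "\<forall>k. 1 \<le> (d(P := N)) k" "\<forall>k>P. (d(P := N)) k = 1" if "1 \<le> N" for N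
    using d ones that by auto
  have Phi_f: "Phi (cfrac (d(P := N))) = ereal (f N)" if "1 \<le> N" for N
    unfolding f_def by (rule Phi_cfrac_eventually_one[OF upd[OF that]])
  have "d(P := 1) = d"
    using ones by auto
  have growth: "(1 / (D + 1)) ^ P * ln (real N) \<le> f N" if "1 \<le> N" for N
  proof -
    have "(1 / (D + 1)) ^ P * ln (real N) \<le> (1 / (D + 1)) ^ P * ln (1 / alpha (cfrac (d(P := N))) P)"
      using alpha_cfrac_last[of "d(P := N)", OF upd[OF that]] that golden_tail_bounds D
      by (simp add: mult_left_mono)
    also have "\<dots> \<le> f N"
      unfolding f_def
      by (rule brjuno_trunc_ge[OF cf_tail_seq_alpha_cfrac[of "d(P := N)", OF upd(1)[OF that]]])
        (use le_D brjuno_golden_nonneg in auto)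
    finally show ?thesis .
  qed
  have "filterlim (\<lambda>N. \<kappa> * ln (real N)) at_top sequentially" if "0 < \<kappa>" for \<kappa> :: real
    using filterlim_tendsto_pos_mult_at_top[OF tendsto_const that
        filterlim_compose[OF ln_at_top filterlim_real_sequentially]]
    by simp
  then have "\<forall>\<^sub>F N in sequentially. f 1 + \<epsilon> < (1 / (D + 1)) ^ P * ln (real N) \<and> 1 \<le> N"
    using D by (intro eventually_conj eventually_ge_at_top) (simp_all add: filterlim_at_top_dense)
  then obtain M where "1 \<le> M" "f 1 + \<epsilon> < f M"
    using growth unfolding eventually_sequentially by (meson nle_le order_less_le_trans)
  moreover have "f (Suc N) \<le> f N + jump_bound P D brjuno_golden" if "1 \<le> N" for N
    unfolding f_def using d le_D D ones that brjuno_golden_nonneg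
    by (intro brjuno_trunc_last_digit_Suc_le) auto
  ultimately obtain N where "1 < N" "f 1 + \<epsilon> < f N" "f N \<le> f 1 + \<epsilon> + jump_bound P D brjuno_golden"
    using exists_crossing_of_bounded_steps[of f 1 "f 1 + \<epsilon>" M] \<epsilon> by auto
  then show ?thesis
    using Phi_f[of 1] Phi_f[of N] small \<open>d(P := 1) = d\<close> by (intro exI[of _ N]) auto
qed

theorem mainTheorem3:
  fixes a :: "nat \<Rightarrow> nat" and n :: nat and \<epsilon> :: real
  assumes "\<forall>k\<le>n. a k > 0"
    and "\<epsilon> > 0"
  shows "\<exists>m::nat. m > 0 \<and> (\<exists>N::nat. N > 0 \<and>
     (let \<omega> = cfrac (\<lambda>k. if k \<le> n then a k else 1);
          \<beta> = cfrac (\<lambda>k. if k \<le> n then a k else if k = n + m then N else 1)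
      in Phi \<omega> + ereal \<epsilon> < Phi \<beta> \<and> Phi \<beta> < Phi \<omega> + ereal (2 * \<epsilon>)))"
proof -
  define d where "d k = (if k \<le> n then a k else 1)" for k
  define D where "D = 1 + (\<Sum>k\<le>n. real (a k))"
  have d: "\<forall>k. 1 \<le> d k"
    using assms(1) by (simp add: d_def Suc_le_eq)
  have "1 \<le> D" "\<forall>k. real (d k) \<le> D"
    using member_le_sum[of _ "{..n}" "\<lambda>k. real (a k)"]
    by (auto simp: d_def D_def sum_nonneg add_increasing)
  moreover obtain P where "n < P" and small: "jump_bound P D brjuno_golden < \<epsilon>"
    using exists_jump_bound_less[OF assms(2)] by blast
  moreover have "\<forall>k\<ge>P. d k = 1"
    using \<open>n < P\<close> by (simp add: d_def)
  ultimately obtain N where "N > 0" and "Phi (cfrac d) + ereal \<epsilon> < Phi (cfrac (d(P := N)))"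
    and "Phi (cfrac (d(P := N))) < Phi (cfrac d) + ereal (2 * \<epsilon>)"
    using exists_last_digit_Phi_between[OF d _ _ _ assms(2)] by blast
  moreover have "(\<lambda>k. if k \<le> n then a k else if k = n + (P - n) then N else 1) = d(P := N)"
    using \<open>n < P\<close> by (auto simp: d_def)
  ultimately show ?thesis
    using \<open>n < P\<close> unfolding Let_def d_def[abs_def] by (intro exI[of _ "P - n"]) auto
qed

end
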